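(* For all $g,b,n\ge0$ the inverse mapping class monoid $\mathcal{IM}_{g,b,n}$ is an inverse monoid, i.e. for every $a\in\mathcal{IM}_{g,b,n}$ there is a unique $c\in\mathcal{IM}_{g,b,n}$ with $aca=a$ and $cac=c$.
   Context: Let $S_{g,b}$ be a compact orientable surface of genus $g$ with $b$ boundary components, and $Q_n$ a fixed set of $n$ interior points. Consider homeomorphisms $f$ of $S_{g,b}$ (fixing the boundary pointwise) together with a subset $\{i_1,\dots,i_k\}\subseteq Q_n$, $0\le k\le n$, that $f$ maps bijectively onto a subset $\{j_1,\dots,j_k\}\subseteq Q_n$. If $h$ maps $\{s_1,\dots,s_l\}\subseteq Q_n$ bijectively onto $\{t_1,\dots,t_l\}\subseteq Q_n$, the composite $h\circ f$ is equipped with the set of those $i_r$ with $f(i_r)\in\{s_1,\dots,s_l\}$ (possibly empty), which it maps bijectively into $Q_n$. The set of isotopy classes of such maps, with this composition, is a monoid denoted $\mathcal{IM}_{g,b,n}$, the inverse mapping class monoid. For $g=0,b=1$ it is the inverse braid monoid. *)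

theory Defs
  imports "HOL-Homology.Homology" "HOL-Algebra.Free_Abelian_Groups" "HOL-Algebra.Elementary_Groups"
begin

text \<open>Closed upper half-plane, the local model of a 2-manifold with boundary.\<close>
definition half_plane :: "(real \<times> real) set" where
  "half_plane = {p. snd p \<ge> 0}"

definition mfd_interior :: "'a topology \<Rightarrow> 'a set" where
  "mfd_interior X = {x \<in> topspace X. \<exists>U V. openin X U \<and> x \<in> U \<and> open (V :: (real \<times> real) set)
       \<and> subtopology X U homeomorphic_space top_of_set V}"

definition mfd_boundary :: "'a topology \<Rightarrow> 'a set" where
  "mfd_boundary X = topspace X - mfd_interior X"

definition surface_with_boundary :: "'a topology \<Rightarrow> bool" where
  "surface_with_boundary X \<longleftrightarrow> Hausdorff_space X \<and>
     (\<forall>x\<in>topspace X. \<exists>U V. openin X U \<and> x \<in> U \<and> openin (top_of_set half_plane) V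
        \<and> subtopology X U homeomorphic_space top_of_set V)"

text \<open>Orientability of a compact connected surface is expressed by
  H_2(X, boundary X; Z) = Z, and the genus via H_1(X; Z) = Z^(2g + max b 1 - 1);
  by the classification of compact surfaces this determines S_{g,b} up to homeomorphism.\<close>
definition is_surface :: "nat \<Rightarrow> nat \<Rightarrow> 'a topology \<Rightarrow> bool" where
  "is_surface g b X \<longleftrightarrow> surface_with_boundary X \<and> compact_space X \<and> connected_space X
     \<and> finite (connected_components_of (subtopology X (mfd_boundary X)))
     \<and> card (connected_components_of (subtopology X (mfd_boundary X))) = b
     \<and> relative_homology_group 2 X (mfd_boundary X) \<cong> integer_group
     \<and> homology_group 1 X \<cong> free_Abelian_group {..< 2 * g + max b 1 - 1}"

text \<open>Representatives: a homeomorphism f of X fixing the boundary pointwise, together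
  with a subset D of Q that f maps (bijectively, f being injective) into Q.\<close>
definition IM_reps :: "'a topology \<Rightarrow> 'a set \<Rightarrow> (('a \<Rightarrow> 'a) \<times> 'a set) set" where
  "IM_reps X Q = {(f, D). homeomorphic_map X X f \<and> (\<forall>x\<in>mfd_boundary X. f x = x)
                          \<and> D \<subseteq> Q \<and> f ` D \<subseteq> Q}"

definition IM_isotopic :: "'a topology \<Rightarrow> ('a \<Rightarrow> 'a) \<times> 'a set \<Rightarrow> ('a \<Rightarrow> 'a) \<times> 'a set \<Rightarrow> bool" where
  "IM_isotopic X p q \<longleftrightarrow> snd p = snd q \<and>
     (\<exists>H. continuous_map (prod_topology (top_of_set {0..1::real}) X) X H
        \<and> (\<forall>t\<in>{0..1}. homeomorphic_map X X (\<lambda>x. H (t, x))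
              \<and> (\<forall>x\<in>mfd_boundary X. H (t, x) = x)
              \<and> (\<forall>d\<in>snd p. H (t, d) = fst p d))
        \<and> (\<forall>x\<in>topspace X. H (0, x) = fst p x \<and> H (1, x) = fst q x))"

definition IM_class :: "'a topology \<Rightarrow> 'a set \<Rightarrow> ('a \<Rightarrow> 'a) \<times> 'a set \<Rightarrow> (('a \<Rightarrow> 'a) \<times> 'a set) set" where
  "IM_class X Q p = {q \<in> IM_reps X Q. IM_isotopic X p q}"

definition IM_comp :: "('a \<Rightarrow> 'a) \<times> 'a set \<Rightarrow> ('a \<Rightarrow> 'a) \<times> 'a set \<Rightarrow> ('a \<Rightarrow> 'a) \<times> 'a set" where
  "IM_comp hS fD = (fst hS \<circ> fst fD, {d \<in> snd fD. fst fD d \<in> snd hS})"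

definition IM :: "'a topology \<Rightarrow> 'a set \<Rightarrow> (('a \<Rightarrow> 'a) \<times> 'a set) set monoid" where
  "IM X Q = \<lparr> carrier = IM_class X Q ` IM_reps X Q,
              monoid.mult = (\<lambda>A B. IM_class X Q (IM_comp (SOME p. p \<in> A) (SOME q. q \<in> B))),
              one = IM_class X Q (\<lambda>x. x, Q) \<rparr>"

end

theory Submission
  imports Defs
begin

text \<open>Isotopies fix the boundary and the values on the chosen marked points, so isotopic
  representatives (f, D) agree on D and the class of (f, D) behaves like the partial bijection
  f|D together with a mapping class.  The class of (f\<inverse>, f(D)) is an inverse of it.  Conversely,
  if c = [(h, S)] satisfies a c a = a and c a c = c, comparing domains and marked values forces
  S = f(D) and h = f\<inverse> on S, and conjugating the isotopy f \<simeq> f h f by f\<inverse> gives an isotopy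
  h \<simeq> f\<inverse> of the right kind.  Neither the surface structure nor the finiteness of the marked
  set plays any role.\<close>

lemma mfd_boundary_subset_topspace: "mfd_boundary X \<subseteq> topspace X"
  by (auto simp: mfd_boundary_def)

lemma homeomorphic_maps_inv_into:
  assumes "homeomorphic_map X Y f"
  shows "homeomorphic_maps X Y f (inv_into (topspace X) f)"
proof -
  obtain g where g: "homeomorphic_maps X Y f g"
    using assms homeomorphic_map_maps by blast
  have "g y = inv_into (topspace X) f y" if "y \<in> topspace Y" for y
    using g that unfolding homeomorphic_maps_map
    by (metis homeomorphic_imp_injective_map homeomorphic_imp_surjective_map image_eqI
        inv_into_f_f)
  then show ?thesis
    using homeomorphic_maps_eq[OF g] by blast
qed

definition IM_admissible :: "'a topology \<Rightarrow> ('a \<Rightarrow> 'a) \<times> 'a set \<Rightarrow> ('a \<Rightarrow> 'a) \<Rightarrow> bool" where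
  "IM_admissible X p k \<longleftrightarrow>
     homeomorphic_map X X k \<and> (\<forall>x\<in>mfd_boundary X. k x = x) \<and> (\<forall>d\<in>snd p. k d = fst p d)"

lemma IM_admissible_cong:
  assumes "snd p \<subseteq> topspace X" "\<And>x. x \<in> topspace X \<Longrightarrow> h x = k x"
  shows "IM_admissible X p h \<longleftrightarrow> IM_admissible X p k"
  using assms mfd_boundary_subset_topspace homeomorphic_map_eq[of X X h k]
    homeomorphic_map_eq[of X X k h]
  unfolding IM_admissible_def by (metis subsetD)

lemma IM_admissible_eq:
  assumes "snd q = snd p" "\<forall>d\<in>snd p. fst q d = fst p d"
  shows "IM_admissible X q = IM_admissible X p"
  using assms unfolding IM_admissible_def by (auto simp: fun_eq_iff)

lemma IM_isotopic_iff_homotopic_with: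
  assumes "snd p \<subseteq> topspace X"
  shows "IM_isotopic X p q \<longleftrightarrow>
           snd p = snd q \<and> homotopic_with (IM_admissible X p) X X (fst p) (fst q)"
proof -
  have "homotopic_with (IM_admissible X p) X X (fst p) (fst q) \<longleftrightarrow>
     (\<exists>H. continuous_map (prod_topology (subtopology euclideanreal {0..1}) X) X H \<and>
          (\<forall>x\<in>topspace X. H (0, x) = fst p x) \<and> (\<forall>x\<in>topspace X. H (1, x) = fst q x) \<and>
          (\<forall>t\<in>{0..1}. IM_admissible X p (\<lambda>x. H (t, x))))"
    by (rule homotopic_with) (rule IM_admissible_cong[OF assms])
  then show ?thesis
    unfolding IM_isotopic_def IM_admissible_def by auto
qed

lemma IM_isotopic_agree:
  assumes "snd p \<subseteq> topspace X" "IM_isotopic X p q"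
  shows "snd q = snd p" and "\<forall>d\<in>snd p. fst q d = fst p d"
    and "IM_admissible X q = IM_admissible X p"
proof -
  have snd: "snd p = snd q" and hom: "homotopic_with (IM_admissible X p) X X (fst p) (fst q)"
    using assms by (auto simp: IM_isotopic_iff_homotopic_with)
  show "\<forall>d\<in>snd p. fst q d = fst p d"
    using homotopic_with_imp_property[OF hom] by (simp add: IM_admissible_def)
  then show "IM_admissible X q = IM_admissible X p"
    using snd by (intro IM_admissible_eq) auto
  show "snd q = snd p"
    using snd by simp
qed

lemma IM_isotopic_eqI:
  assumes "homeomorphic_map X X (fst p)" "\<forall>x\<in>mfd_boundary X. fst p x = x"
    "snd p \<subseteq> topspace X" "snd q = snd p" "\<And>x. x \<in> topspace X \<Longrightarrow> fst q x = fst p x"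
  shows "IM_isotopic X p q"
proof -
  have start: "IM_admissible X p (fst p)"
    using assms(1,2) by (simp add: IM_admissible_def)
  then have "IM_admissible X p (fst q)"
    using IM_admissible_cong[OF assms(3)] assms(5) by metis
  with start have "homotopic_with (IM_admissible X p) X X (fst p) (fst q)"
    using assms(1,5) homeomorphic_imp_continuous_map homotopic_with_equal by metis
  then show ?thesis
    using assms(3,4) by (simp add: IM_isotopic_iff_homotopic_with)
qed

lemma IM_isotopic_sym:
  assumes "snd p \<subseteq> topspace X" "IM_isotopic X p q"
  shows "IM_isotopic X q p"
proof -
  have "homotopic_with (IM_admissible X q) X X (fst q) (fst p)"
    using assms IM_isotopic_agree(3)[OF assms] homotopic_with_sym
    by (metis IM_isotopic_iff_homotopic_with)
  then show ?thesis
    using assms IM_isotopic_agree(1)[OF assms] by (simp add: IM_isotopic_iff_homotopic_with)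
qed

lemma IM_isotopic_trans:
  assumes "snd p \<subseteq> topspace X" "IM_isotopic X p q" "IM_isotopic X q r"
  shows "IM_isotopic X p r"
proof -
  have "snd q \<subseteq> topspace X"
    using assms(1) IM_isotopic_agree(1)[OF assms(1,2)] by simp
  then have "snd q = snd r" "homotopic_with (IM_admissible X p) X X (fst q) (fst r)"
    using assms(3) IM_isotopic_agree(3)[OF assms(1,2)]
    by (auto simp: IM_isotopic_iff_homotopic_with)
  then show ?thesis
    using assms(1,2) homotopic_with_trans by (fastforce simp: IM_isotopic_iff_homotopic_with)
qed

lemma IM_repsD:
  assumes "p \<in> IM_reps X Q"
  shows "homeomorphic_map X X (fst p)" "\<forall>x\<in>mfd_boundary X. fst p x = x"
    "snd p \<subseteq> Q" "fst p ` snd p \<subseteq> Q"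
  using assms by (auto simp: IM_reps_def)

lemma IM_comp_in_reps:
  assumes "p \<in> IM_reps X Q" "q \<in> IM_reps X Q"
  shows "IM_comp p q \<in> IM_reps X Q"
  using assms unfolding IM_reps_def IM_comp_def
  by (auto intro: homeomorphic_map_compose)

lemma IM_comp_assoc: "IM_comp (IM_comp p q) r = IM_comp p (IM_comp q r)"
  by (auto simp: IM_comp_def)

locale marked_space =
  fixes X :: "'a topology" and Q :: "'a set"
  assumes marked_subset_topspace: "Q \<subseteq> topspace X"
begin

lemma reps_snd_subset_topspace: "p \<in> IM_reps X Q \<Longrightarrow> snd p \<subseteq> topspace X"
  using marked_subset_topspace by (auto simp: IM_reps_def)

lemma IM_isotopic_refl: "p \<in> IM_reps X Q \<Longrightarrow> IM_isotopic X p p"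
  by (rule IM_isotopic_eqI) (auto simp: IM_repsD reps_snd_subset_topspace)

lemma IM_isotopic_comp_left:
  assumes "p \<in> IM_reps X Q" "q \<in> IM_reps X Q" "IM_isotopic X p p'"
  shows "IM_isotopic X (IM_comp p q) (IM_comp p' q)"
proof -
  have "homotopic_with (IM_admissible X p) X X (fst p) (fst p')"
    using assms(3) reps_snd_subset_topspace[OF assms(1)]
    by (simp add: IM_isotopic_iff_homotopic_with)
  then have "homotopic_with (IM_admissible X (IM_comp p q)) X X
               (fst p \<circ> fst q) (fst p' \<circ> fst q)"
  proof (rule homotopic_with_compose_continuous_map_right)
    show "continuous_map X X (fst q)"
      using IM_repsD(1)[OF assms(2)] homeomorphic_imp_continuous_map by blast
    show "IM_admissible X (IM_comp p q) (j \<circ> fst q)" if "IM_admissible X p j" for j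
      using that IM_repsD[OF assms(2)] unfolding IM_admissible_def IM_comp_def
      by (auto intro: homeomorphic_map_compose)
  qed
  moreover have "snd (IM_comp p q) = snd (IM_comp p' q)"
    using IM_isotopic_agree(1)[OF reps_snd_subset_topspace[OF assms(1)] assms(3)]
    by (simp add: IM_comp_def)
  ultimately show ?thesis
    using reps_snd_subset_topspace[OF IM_comp_in_reps[OF assms(1,2)]]
    by (simp add: IM_isotopic_iff_homotopic_with IM_comp_def)
qed

lemma IM_isotopic_comp_right:
  assumes "p \<in> IM_reps X Q" "q \<in> IM_reps X Q" "IM_isotopic X q q'"
  shows "IM_isotopic X (IM_comp p q) (IM_comp p q')"
proof -
  have "homotopic_with (IM_admissible X q) X X (fst q) (fst q')"
    using assms(3) reps_snd_subset_topspace[OF assms(2)]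
    by (simp add: IM_isotopic_iff_homotopic_with)
  then have "homotopic_with (IM_admissible X (IM_comp p q)) X X
               (fst p \<circ> fst q) (fst p \<circ> fst q')"
  proof (rule homotopic_with_compose_continuous_map_left)
    show "continuous_map X X (fst p)"
      using IM_repsD(1)[OF assms(1)] homeomorphic_imp_continuous_map by blast
    show "IM_admissible X (IM_comp p q) (fst p \<circ> j)" if "IM_admissible X q j" for j
      using that IM_repsD[OF assms(1)] unfolding IM_admissible_def IM_comp_def
      by (auto intro: homeomorphic_map_compose)
  qed
  moreover have "snd (IM_comp p q) = snd (IM_comp p q')"
    using IM_isotopic_agree(1,2)[OF reps_snd_subset_topspace[OF assms(2)] assms(3)]
    by (auto simp: IM_comp_def)
  ultimately show ?thesis
    using reps_snd_subset_topspace[OF IM_comp_in_reps[OF assms(1,2)]]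
    by (simp add: IM_isotopic_iff_homotopic_with IM_comp_def)
qed

lemma IM_class_self: "p \<in> IM_reps X Q \<Longrightarrow> p \<in> IM_class X Q p"
  using IM_isotopic_refl by (simp add: IM_class_def)

lemma IM_class_eq_iff:
  assumes "p \<in> IM_reps X Q" "q \<in> IM_reps X Q"
  shows "IM_class X Q p = IM_class X Q q \<longleftrightarrow> IM_isotopic X p q"
proof
  assume "IM_class X Q p = IM_class X Q q"
  then show "IM_isotopic X p q"
    using IM_class_self[OF assms(2)] by (auto simp: IM_class_def)
next
  assume pq: "IM_isotopic X p q"
  have qp: "IM_isotopic X q p"
    using IM_isotopic_sym[OF reps_snd_subset_topspace[OF assms(1)] pq] .
  show "IM_class X Q p = IM_class X Q q"
    using IM_isotopic_trans[OF reps_snd_subset_topspace[OF assms(1)] pq]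
      IM_isotopic_trans[OF reps_snd_subset_topspace[OF assms(2)] qp]
    by (auto simp: IM_class_def)
qed

lemma carrier_IM: "carrier (IM X Q) = IM_class X Q ` IM_reps X Q"
  by (simp add: IM_def)

lemma IM_mult_class:
  assumes "p \<in> IM_reps X Q" "q \<in> IM_reps X Q"
  shows "IM_class X Q p \<otimes>\<^bsub>IM X Q\<^esub> IM_class X Q q = IM_class X Q (IM_comp p q)"
proof -
  have some_rep: "(SOME r. r \<in> IM_class X Q s) \<in> IM_reps X Q \<and>
                    IM_isotopic X s (SOME r. r \<in> IM_class X Q s)" if "s \<in> IM_reps X Q" for s
  proof -
    have "(SOME r. r \<in> IM_class X Q s) \<in> IM_class X Q s"
      using IM_class_self[OF that] by (rule someI)
    then show ?thesis
      unfolding IM_class_def by (rule CollectD)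
  qed
  define p' where "p' = (SOME r. r \<in> IM_class X Q p)"
  define q' where "q' = (SOME r. r \<in> IM_class X Q q)"
  have p': "p' \<in> IM_reps X Q" "IM_isotopic X p p'"
    using some_rep[OF assms(1)] unfolding p'_def by blast+
  have q': "q' \<in> IM_reps X Q" "IM_isotopic X q q'"
    using some_rep[OF assms(2)] unfolding q'_def by blast+
  have "IM_isotopic X (IM_comp p q) (IM_comp p' q')"
    using IM_isotopic_trans[OF reps_snd_subset_topspace[OF IM_comp_in_reps[OF assms]]
        IM_isotopic_comp_left[OF assms p'(2)] IM_isotopic_comp_right[OF p'(1) assms(2) q'(2)]] .
  then have "IM_class X Q (IM_comp p q) = IM_class X Q (IM_comp p' q')"
    using IM_class_eq_iff[OF IM_comp_in_reps[OF assms] IM_comp_in_reps[OF p'(1) q'(1)]] by blast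
  then show ?thesis
    unfolding p'_def q'_def by (simp add: IM_def)
qed

lemma IM_id_in_reps: "(\<lambda>x. x, Q) \<in> IM_reps X Q"
  using homeomorphic_map_id[of X X] by (simp add: IM_reps_def id_def)

lemma monoid_IM: "monoid (IM X Q)"
proof (rule monoidI)
  fix x y assume "x \<in> carrier (IM X Q)" "y \<in> carrier (IM X Q)"
  then show "x \<otimes>\<^bsub>IM X Q\<^esub> y \<in> carrier (IM X Q)"
    by (auto simp: carrier_IM IM_mult_class IM_comp_in_reps)
next
  show "\<one>\<^bsub>IM X Q\<^esub> \<in> carrier (IM X Q)"
    using IM_id_in_reps by (simp add: IM_def)
next
  fix x y z
  assume "x \<in> carrier (IM X Q)" "y \<in> carrier (IM X Q)" "z \<in> carrier (IM X Q)"
  then show "x \<otimes>\<^bsub>IM X Q\<^esub> y \<otimes>\<^bsub>IM X Q\<^esub> z = x \<otimes>\<^bsub>IM X Q\<^esub> (y \<otimes>\<^bsub>IM X Q\<^esub> z)"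
    by (auto simp: carrier_IM IM_mult_class IM_comp_in_reps IM_comp_assoc)
next
  fix x assume "x \<in> carrier (IM X Q)"
  then obtain p where p: "p \<in> IM_reps X Q" and x: "x = IM_class X Q p"
    by (auto simp: carrier_IM)
  have one: "\<one>\<^bsub>IM X Q\<^esub> = IM_class X Q (\<lambda>x. x, Q)"
    by (simp add: IM_def)
  have "IM_comp (\<lambda>x. x, Q) p = p" "IM_comp p (\<lambda>x. x, Q) = p"
    using IM_repsD(3,4)[OF p] by (cases p, auto simp: IM_comp_def)+
  then show "\<one>\<^bsub>IM X Q\<^esub> \<otimes>\<^bsub>IM X Q\<^esub> x = x" "x \<otimes>\<^bsub>IM X Q\<^esub> \<one>\<^bsub>IM X Q\<^esub> = x"
    by (simp_all add: one x IM_mult_class[OF IM_id_in_reps p] IM_mult_class[OF p IM_id_in_reps])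
qed

lemma IM_regular_class_iff:
  assumes "p \<in> IM_reps X Q" "q \<in> IM_reps X Q"
  shows "IM_class X Q p \<otimes>\<^bsub>IM X Q\<^esub> IM_class X Q q \<otimes>\<^bsub>IM X Q\<^esub> IM_class X Q p = IM_class X Q p
           \<longleftrightarrow> IM_isotopic X p (IM_comp (IM_comp p q) p)"
proof -
  have pqp: "IM_comp (IM_comp p q) p \<in> IM_reps X Q"
    using assms by (intro IM_comp_in_reps)
  show ?thesis
    using IM_class_eq_iff[OF pqp assms(1)] IM_class_eq_iff[OF assms(1) pqp]
    by (auto simp: IM_mult_class IM_comp_in_reps assms)
qed

end

definition IM_inverse :: "'a topology \<Rightarrow> ('a \<Rightarrow> 'a) \<times> 'a set \<Rightarrow> ('a \<Rightarrow> 'a) \<times> 'a set" where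
  "IM_inverse X p = (inv_into (topspace X) (fst p), fst p ` snd p)"

lemma IM_admissible_conjugate:
  assumes "homeomorphic_maps X X f g" "\<forall>x\<in>mfd_boundary X. f x = x" "D \<subseteq> topspace X"
    "\<forall>d\<in>D. h (f d) = d" "IM_admissible X (f, D) j"
  shows "IM_admissible X (h, f ` D) (g \<circ> j \<circ> g)"
proof -
  have g: "homeomorphic_map X X g" "\<forall>x\<in>topspace X. g (f x) = x"
    using assms(1) by (auto simp: homeomorphic_maps_map)
  then have "\<forall>x\<in>mfd_boundary X. g x = x"
    using assms(2) mfd_boundary_subset_topspace by (metis subsetD)
  then show ?thesis
    using assms(3-5) g unfolding IM_admissible_def
    by (auto intro!: homeomorphic_map_compose subsetD[OF assms(3)])
qed

context marked_space
begin

lemma IM_inverse_maps: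
  assumes "p \<in> IM_reps X Q"
  shows "homeomorphic_maps X X (fst p) (fst (IM_inverse X p))"
  using homeomorphic_maps_inv_into[OF IM_repsD(1)[OF assms]] by (simp add: IM_inverse_def)

lemma IM_inverse_in_reps:
  assumes "p \<in> IM_reps X Q"
  shows "IM_inverse X p \<in> IM_reps X Q"
proof -
  have g: "homeomorphic_map X X (fst (IM_inverse X p))"
    "\<forall>x\<in>topspace X. fst (IM_inverse X p) (fst p x) = x"
    using IM_inverse_maps[OF assms] by (auto simp: homeomorphic_maps_map)
  then have "\<forall>x\<in>mfd_boundary X. fst (IM_inverse X p) x = x"
    using IM_repsD(2)[OF assms] mfd_boundary_subset_topspace by (metis subsetD)
  then show ?thesis
    using g IM_repsD(3,4)[OF assms] reps_snd_subset_topspace[OF assms]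
    by (auto simp: IM_reps_def IM_inverse_def subset_iff)
qed

lemma IM_isotopic_comp_inverse:
  assumes "p \<in> IM_reps X Q"
  shows "IM_isotopic X p (IM_comp (IM_comp p (IM_inverse X p)) p)"
    and "IM_isotopic X (IM_inverse X p) (IM_comp (IM_comp (IM_inverse X p) p) (IM_inverse X p))"
proof -
  have maps: "\<forall>x\<in>topspace X. fst (IM_inverse X p) (fst p x) = x"
    "\<forall>x\<in>topspace X. fst p (fst (IM_inverse X p) x) = x"
    "\<forall>x\<in>topspace X. fst (IM_inverse X p) x \<in> topspace X"
    using IM_inverse_maps[OF assms] by (auto simp: homeomorphic_maps_def continuous_map_def)
  have D: "snd p \<subseteq> topspace X"
    by (rule reps_snd_subset_topspace[OF assms])
  show "IM_isotopic X p (IM_comp (IM_comp p (IM_inverse X p)) p)"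
    by (rule IM_isotopic_eqI)
      (use IM_repsD[OF assms] D maps in \<open>auto simp: IM_comp_def IM_inverse_def subset_iff\<close>)
  show "IM_isotopic X (IM_inverse X p) (IM_comp (IM_comp (IM_inverse X p) p) (IM_inverse X p))"
    by (rule IM_isotopic_eqI)
      (use IM_repsD[OF IM_inverse_in_reps[OF assms]]
          reps_snd_subset_topspace[OF IM_inverse_in_reps[OF assms]] D maps
        in \<open>auto simp: IM_comp_def IM_inverse_def subset_iff\<close>)
qed

lemma IM_isotopic_sandwich_imp_inverse_on:
  assumes "p \<in> IM_reps X Q" "IM_isotopic X p (IM_comp (IM_comp p q) p)"
  shows "\<forall>d\<in>snd p. fst p d \<in> snd q \<and> fst q (fst p d) = d"
proof -
  have D: "snd p \<subseteq> topspace X"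
    by (rule reps_snd_subset_topspace[OF assms(1)])
  have dom: "\<forall>d\<in>snd p. fst p d \<in> snd q \<and> fst q (fst p d) \<in> snd p"
    and fixed: "\<forall>d\<in>snd p. fst p (fst q (fst p d)) = fst p d"
    using IM_isotopic_agree(1,2)[OF D assms(2)] by (auto simp: IM_comp_def)
  have "inj_on (fst p) (topspace X)"
    using homeomorphic_imp_injective_map[OF IM_repsD(1)[OF assms(1)]] .
  then show ?thesis
    using dom fixed D by (meson inj_onD subsetD)
qed

lemma IM_isotopic_inverse_unique:
  assumes p: "p \<in> IM_reps X Q" and q: "q \<in> IM_reps X Q"
    and pqp: "IM_isotopic X p (IM_comp (IM_comp p q) p)"
    and qpq: "IM_isotopic X q (IM_comp (IM_comp q p) q)"
  shows "IM_isotopic X q (IM_inverse X p)"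
proof -
  obtain f D h S where pq: "p = (f, D)" "q = (h, S)"
    by fastforce
  define g where "g = fst (IM_inverse X p)"
  have fg: "homeomorphic_maps X X f g"
    using IM_inverse_maps[OF p] by (simp add: pq g_def)
  have Dt: "D \<subseteq> topspace X" and St: "S \<subseteq> topspace X"
    using reps_snd_subset_topspace[OF p] reps_snd_subset_topspace[OF q] by (simp_all add: pq)
  have fD: "\<forall>d\<in>D. f d \<in> S \<and> h (f d) = d" and hS: "\<forall>s\<in>S. h s \<in> D \<and> f (h s) = s"
    using IM_isotopic_sandwich_imp_inverse_on[OF p pqp]
      IM_isotopic_sandwich_imp_inverse_on[OF q qpq]
    by (simp_all add: pq)
  then have S: "S = f ` D"
    by force
  have "homotopic_with (IM_admissible X p) X X f (f \<circ> h \<circ> f)"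
    using pqp Dt by (simp add: IM_isotopic_iff_homotopic_with IM_comp_def pq)
  then have "homotopic_with (\<lambda>k. IM_admissible X q (k \<circ> g)) X X (g \<circ> f) (g \<circ> (f \<circ> h \<circ> f))"
  proof (rule homotopic_with_compose_continuous_map_left)
    show "continuous_map X X g"
      using fg by (simp add: homeomorphic_maps_def)
    show "IM_admissible X q (g \<circ> j \<circ> g)" if "IM_admissible X p j" for j
      using IM_admissible_conjugate[OF fg _ Dt] IM_repsD(2)[OF p] fD that by (simp add: pq S)
  qed
  then have "homotopic_with (IM_admissible X q) X X (g \<circ> f \<circ> g) (g \<circ> (f \<circ> h \<circ> f) \<circ> g)"
    by (rule homotopic_with_compose_continuous_map_right)
      (use fg in \<open>auto simp: homeomorphic_maps_def\<close>)
  then have "homotopic_with (IM_admissible X q) X X g h"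
  proof (rule homotopic_with_eq)
    fix x assume x: "x \<in> topspace X"
    have "h x \<in> topspace X"
      using x IM_repsD(1)[OF q] homeomorphic_imp_surjective_map by (fastforce simp: pq)
    then show "g x = (g \<circ> f \<circ> g) x" "h x = (g \<circ> (f \<circ> h \<circ> f) \<circ> g) x"
      using x fg by (auto simp: homeomorphic_maps_def continuous_map_def)
  qed (rule IM_admissible_cong, use St pq in simp)
  then show ?thesis
    using St S by (simp add: IM_isotopic_iff_homotopic_with homotopic_with_sym pq g_def IM_inverse_def)
qed

lemma IM_unique_inverse:
  assumes "a \<in> carrier (IM X Q)"
  shows "\<exists>!c. c \<in> carrier (IM X Q) \<and> a \<otimes>\<^bsub>IM X Q\<^esub> c \<otimes>\<^bsub>IM X Q\<^esub> a = a \<and>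
               c \<otimes>\<^bsub>IM X Q\<^esub> a \<otimes>\<^bsub>IM X Q\<^esub> c = c"
proof -
  obtain p where p: "p \<in> IM_reps X Q" and a: "a = IM_class X Q p"
    using assms unfolding carrier_IM by blast
  show ?thesis
  proof (rule ex1I)
    show "IM_class X Q (IM_inverse X p) \<in> carrier (IM X Q) \<and>
        a \<otimes>\<^bsub>IM X Q\<^esub> IM_class X Q (IM_inverse X p) \<otimes>\<^bsub>IM X Q\<^esub> a = a \<and>
        IM_class X Q (IM_inverse X p) \<otimes>\<^bsub>IM X Q\<^esub> a \<otimes>\<^bsub>IM X Q\<^esub> IM_class X Q (IM_inverse X p)
          = IM_class X Q (IM_inverse X p)"
      using p IM_inverse_in_reps[OF p] IM_isotopic_comp_inverse[OF p]
      by (simp add: a carrier_IM IM_regular_class_iff)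
  next
    fix c
    assume c: "c \<in> carrier (IM X Q) \<and> a \<otimes>\<^bsub>IM X Q\<^esub> c \<otimes>\<^bsub>IM X Q\<^esub> a = a \<and>
               c \<otimes>\<^bsub>IM X Q\<^esub> a \<otimes>\<^bsub>IM X Q\<^esub> c = c"
    then obtain q where q: "q \<in> IM_reps X Q" and "c = IM_class X Q q"
      unfolding carrier_IM by blast
    with c show "c = IM_class X Q (IM_inverse X p)"
      using p IM_inverse_in_reps[OF p] IM_isotopic_inverse_unique[OF p q]
      by (simp add: a IM_regular_class_iff IM_class_eq_iff)
  qed
qed

end

theorem mainTheorem5:
  fixes X :: "'a topology" and Q :: "'a set" and g b n :: nat
  assumes "is_surface g b X"
    and "Q \<subseteq> topspace X - mfd_boundary X" and "finite Q" and "card Q = n"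
  shows "monoid (IM X Q) \<and>
         (\<forall>a\<in>carrier (IM X Q). \<exists>!c. c \<in> carrier (IM X Q) \<and>
             a \<otimes>\<^bsub>IM X Q\<^esub> c \<otimes>\<^bsub>IM X Q\<^esub> a = a \<and>
             c \<otimes>\<^bsub>IM X Q\<^esub> a \<otimes>\<^bsub>IM X Q\<^esub> c = c)"
proof -
  interpret marked_space X Q
    using assms(2) by unfold_locales blast
  show ?thesis
    using monoid_IM IM_unique_inverse by blast
qed

end
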